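(* Let $\mu$ be a probability measure on $\mathbb{R}^n$ with finite first moment whose support is not contained in any affine hyperplane. Then there is a constant $c=c_\mu>0$ such that for every probability measure $\varrho$ on $\mathbb{R}^n$ with finite first moment and barycenter at the origin, $$\mathcal{T}(\varrho,\mu)\ \ge\ c\int_{\mathbb{R}^n}|x|\,d\varrho(x).$$
   Context: For probability measures $\varrho,\mu$ on $\mathbb{R}^n$ with finite first moment, $\Pi(\varrho,\mu)$ is the set of measures $\pi$ on $\mathbb{R}^n\times\mathbb{R}^n$ with marginals $\varrho$ and $\mu$, and the maximal correlation functional is $\mathcal{T}(\varrho,\mu)=\sup\{\int_{\mathbb{R}^n\times\mathbb{R}^n}\langle x,y\rangle\,d\pi(x,y):\pi\in\Pi(\varrho,\mu)\}$. The measure $\varrho$ is not assumed absolutely continuous. *)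

theory Defs
  imports "HOL-Probability.Probability"
begin

definition prob_fm :: "'a::euclidean_space measure \<Rightarrow> bool" where
  "prob_fm M \<longleftrightarrow> prob_space M \<and> sets M = sets borel \<and> integrable M (\<lambda>x. norm x)"

definition couplings :: "'a::euclidean_space measure \<Rightarrow> 'a measure \<Rightarrow> ('a \<times> 'a) measure set" where
  "couplings \<rho> \<mu> = {\<pi>. prob_space \<pi> \<and> sets \<pi> = sets (borel \<Otimes>\<^sub>M borel)
       \<and> distr \<pi> borel fst = \<rho> \<and> distr \<pi> borel snd = \<mu>}"

definition corr_pos :: "('a::euclidean_space \<times> 'a) measure \<Rightarrow> ennreal" where
  "corr_pos \<pi> = (\<integral>\<^sup>+ z. ennreal (max 0 (fst z \<bullet> snd z)) \<partial>\<pi>)"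

definition corr_neg :: "('a::euclidean_space \<times> 'a) measure \<Rightarrow> ennreal" where
  "corr_neg \<pi> = (\<integral>\<^sup>+ z. ennreal (max 0 (- (fst z \<bullet> snd z))) \<partial>\<pi>)"

text \<open>Integral of \<open>\<langle>x,y\<rangle>\<close> in the extended sense (defined when not both parts are infinite).\<close>
definition corr_integral :: "('a::euclidean_space \<times> 'a) measure \<Rightarrow> ereal" where
  "corr_integral \<pi> = enn2ereal (corr_pos \<pi>) - enn2ereal (corr_neg \<pi>)"

definition max_corr :: "'a::euclidean_space measure \<Rightarrow> 'a measure \<Rightarrow> ereal" where
  "max_corr \<rho> \<mu> = (SUP \<pi> \<in> {\<pi> \<in> couplings \<rho> \<mu>. corr_pos \<pi> < \<infinity> \<or> corr_neg \<pi> < \<infinity>}.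
       corr_integral \<pi>)"

definition msupport :: "'a::euclidean_space measure \<Rightarrow> 'a set" where
  "msupport M = {x. \<forall>e>0. emeasure M (ball x e) > 0}"

definition affine_hyperplane :: "'a::euclidean_space set \<Rightarrow> bool" where
  "affine_hyperplane H \<longleftrightarrow> (\<exists>a b. a \<noteq> 0 \<and> H = {x. a \<bullet> x = b})"

end

theory Submission
  imports Defs
begin

text \<open>
  For a direction \<open>w\<close> let \<open>G\<^sub>w(y) = arctan (w \<bullet> y) - \<integral> arctan (w \<bullet> z) d\<mu>\<close>, a bounded function
  of mean zero under \<open>\<mu>\<close>, and \<open>V\<^sub>w = \<integral> G\<^sub>w(y) y d\<mu>\<close>. Then \<open>w \<bullet> V\<^sub>w\<close> is the covariance of
  \<open>w \<bullet> y\<close> and the strictly increasing function \<open>arctan (w \<bullet> y)\<close> of it, which is positive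
  because \<open>w \<bullet> y\<close> is not \<open>\<mu>\<close>-a.e. constant (the support of \<open>\<mu>\<close> lies in no hyperplane).
  By compactness of the unit sphere, finitely many directions \<open>W\<close> give
  \<open>\<delta> |x| \<le> \<Sum>\<^sub>w\<^sub>\<in>\<^sub>W (x \<bullet> V\<^sub>w)\<^sup>+\<close>.

  Given \<open>\<rho>\<close> with barycenter 0, perturb the product coupling \<open>\<rho> \<otimes> \<mu>\<close> by the density
  \<open>1 + t \<Sum>\<^sub>w (1[x \<bullet> V\<^sub>w > 0] - \<rho>{x \<bullet> V\<^sub>w > 0}) G\<^sub>w(y)\<close>. Both factors of each summand have
  mean zero, so for small \<open>t > 0\<close> this is again a coupling, and its correlation is
  \<open>t \<Sum>\<^sub>w \<integral> (x \<bullet> V\<^sub>w)\<^sup>+ d\<rho> \<ge> t \<delta> \<integral> |x| d\<rho>\<close>.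
\<close>

lemma prob_fmD:
  assumes "prob_fm M"
  shows "prob_space M" "sets M = sets borel" "borel_measurable M = borel_measurable borel"
    and "integrable M norm" "integrable M (\<lambda>x. x)"
proof -
  show "prob_space M" "sets M = sets borel" "integrable M norm"
    using assms by (simp_all add: prob_fm_def)
  show bm: "borel_measurable M = borel_measurable borel"
    by (rule measurable_cong_sets[OF \<open>sets M = sets borel\<close> refl])
  show "integrable M (\<lambda>x. x)"
    by (rule integrable_norm_cancel[OF \<open>integrable M norm\<close>]) (simp add: bm)
qed

lemma integrable_bounded_scaleR:
  fixes f :: "_ \<Rightarrow> 'b::{banach,second_countable_topology}"
  assumes f: "integrable M f" and g: "g \<in> borel_measurable M" and B: "\<And>x. \<bar>g x\<bar> \<le> B"
  shows "integrable M (\<lambda>x. g x *\<^sub>R f x)"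
proof (rule Bochner_Integration.integrable_bound[where f="\<lambda>x. B *\<^sub>R f x"])
  show "integrable M (\<lambda>x. B *\<^sub>R f x)" using f by simp
  show "(\<lambda>x. g x *\<^sub>R f x) \<in> borel_measurable M"
    using g borel_measurable_integrable[OF f] by measurable
  have "0 \<le> B" using B order_trans abs_ge_zero by blast
  then show "AE x in M. norm (g x *\<^sub>R f x) \<le> norm (B *\<^sub>R f x)"
    using B by (intro AE_I2) (simp add: mult_right_mono)
qed

lemma mono_diff_mult_nonneg:
  fixes g :: "'a::linordered_ring \<Rightarrow> 'a"
  assumes "mono g"
  shows "0 \<le> (g a - g c) * (a - c)"
proof (cases "a \<le> c")
  case True
  with assms have "g a \<le> g c"
    by (rule monoD)
  with True show ?thesis
    by (simp add: mult_nonpos_nonpos)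
next
  case False
  then have "c \<le> a"
    by simp
  with assms have "g c \<le> g a"
    by (rule monoD)
  with False show ?thesis
    by simp
qed

lemma integral_strict_mono_diff_mult_pos:
  fixes Z :: "'a \<Rightarrow> real" and g :: "real \<Rightarrow> real"
  assumes g: "strict_mono g" and int: "integrable M (\<lambda>x. (g (Z x) - g c) * (Z x - c))"
    and nonconst: "\<not> (AE x in M. Z x = c)"
  shows "(\<integral>x. (g (Z x) - g c) * (Z x - c) \<partial>M) > 0"
proof -
  have nonneg: "0 \<le> (g (Z x) - g c) * (Z x - c)" for x
    using g by (intro mono_diff_mult_nonneg strict_mono_mono)
  have "(\<integral>x. (g (Z x) - g c) * (Z x - c) \<partial>M) \<noteq> 0"
  proof
    assume "(\<integral>x. (g (Z x) - g c) * (Z x - c) \<partial>M) = 0"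
    then have "AE x in M. (g (Z x) - g c) * (Z x - c) = 0"
      using integral_nonneg_eq_0_iff_AE[OF int] nonneg by simp
    moreover have "Z x = c" if "(g (Z x) - g c) * (Z x - c) = 0" for x
      using that strict_mono_eq[OF g, of "Z x" c] by auto
    ultimately have "AE x in M. Z x = c"
      by (metis (mono_tags, lifting) AE_mp AE_I2)
    with nonconst show False ..
  qed
  moreover have "(\<integral>x. (g (Z x) - g c) * (Z x - c) \<partial>M) \<ge> 0"
    using nonneg by (simp add: integral_nonneg)
  ultimately show ?thesis
    by linarith
qed

lemma (in prob_space) covariance_strict_mono_pos:
  fixes Z :: "'a \<Rightarrow> real" and g :: "real \<Rightarrow> real"
  assumes Z: "integrable M Z" and g: "strict_mono g" "\<And>t. \<bar>g t\<bar> \<le> B"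
    and nonconst: "\<not> (AE x in M. Z x = expectation Z)"
  shows "expectation (\<lambda>x. (g (Z x) - expectation (\<lambda>x. g (Z x))) * Z x) > 0"
proof -
  define c where "c = expectation Z"
  define E where "E = expectation (\<lambda>x. g (Z x))"
  have [measurable]: "g \<in> borel_measurable borel"
    using g(1) by (simp add: borel_measurable_mono strict_mono_mono)
  have [measurable]: "Z \<in> borel_measurable M"
    using Z by simp
  have gZ: "integrable M (\<lambda>x. g (Z x))"
    using g(2) by (intro integrable_const_bound[where B=B]) auto
  have Zc: "integrable M (\<lambda>x. Z x - c)"
    using Z by simp
  have prod: "integrable M (\<lambda>x. (g (Z x) - g c) * (Z x - c))"
  proof -
    have "\<bar>g (Z x) - g c\<bar> \<le> B + B" for x
      using abs_triangle_ineq4[of "g (Z x)" "g c"] g(2)[of "Z x"] g(2)[of c] by linarith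
    from integrable_bounded_scaleR[OF Zc _ this] show ?thesis by simp
  qed
  \<comment> \<open>Subtracting the constants \<open>g c\<close> and \<open>c\<close> only adds terms of mean zero.\<close>
  have "expectation (\<lambda>x. (g (Z x) - E) * Z x)
      = expectation (\<lambda>x. (g (Z x) - g c) * (Z x - c) + ((g c - E) * (Z x - c) + c * (g (Z x) - E)))"
    by (rule Bochner_Integration.integral_cong) (auto simp: algebra_simps)
  also have "\<dots> = expectation (\<lambda>x. (g (Z x) - g c) * (Z x - c))"
    using prod Zc gZ Z by (simp add: c_def E_def prob_space)
  also have "\<dots> > 0"
    using g(1) prod nonconst unfolding c_def by (rule integral_strict_mono_diff_mult_pos)
  finally show ?thesis
    by (simp add: E_def)
qed

lemma msupport_subset_closed:
  assumes "sets M = sets borel" "closed C" "AE x in M. x \<in> C"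
  shows "msupport M \<subseteq> C"
proof
  fix y assume y: "y \<in> msupport M"
  show "y \<in> C"
  proof (rule ccontr)
    assume "y \<notin> C"
    moreover have "open (- C)"
      using \<open>closed C\<close> by (simp add: open_Compl)
    ultimately obtain e where e: "e > 0" "ball y e \<subseteq> - C"
      unfolding open_contains_ball by blast
    have "AE x in M. x \<notin> ball y e"
      using assms(3) by eventually_elim (use e(2) in blast)
    from emeasure_eq_0_AE[OF this] have "emeasure M (ball y e) = 0"
      using sets_eq_imp_space_eq[OF assms(1)] by (simp add: ball_def)
    moreover have "emeasure M (ball y e) > 0"
      using y e(1) by (simp add: msupport_def)
    ultimately show False by simp
  qed
qed

lemma finite_directions_cover_sphere:
  fixes V :: "'a::euclidean_space \<Rightarrow> 'a"
  assumes pos: "\<And>w. w \<noteq> 0 \<Longrightarrow> w \<bullet> V w > 0"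
  obtains W where "finite W" "W \<subseteq> sphere 0 1" "W \<noteq> {}"
    and "\<And>u. u \<in> sphere 0 1 \<Longrightarrow> \<exists>w\<in>W. (w \<bullet> V w) / 2 < u \<bullet> V w"
proof -
  define C where "C w = {u. (w \<bullet> V w) / 2 < V w \<bullet> u}" for w
  have "sphere 0 1 \<subseteq> (\<Union>w\<in>sphere 0 1. C w)"
  proof
    fix u :: 'a assume u: "u \<in> sphere 0 1"
    then have "u \<noteq> 0" by auto
    then have "u \<in> C u"
      using pos[of u] by (simp add: C_def inner_commute)
    with u show "u \<in> (\<Union>w\<in>sphere 0 1. C w)" by blast
  qed
  moreover have "open (C w)" for w
    unfolding C_def by (rule open_halfspace_gt)
  ultimately obtain W where W: "W \<subseteq> sphere 0 1" "finite W" "sphere (0::'a) 1 \<subseteq> (\<Union>w\<in>W. C w)"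
    by (metis compact_sphere compactE_image)
  have cover: "\<exists>w\<in>W. (w \<bullet> V w) / 2 < u \<bullet> V w" if "u \<in> sphere 0 1" for u
    using W(3) that by (auto simp: C_def inner_commute)
  have "sphere (0::'a) 1 \<noteq> {}"
    by simp
  with W(3) have "W \<noteq> {}"
    by blast
  from W(2,1) this cover show thesis
    by (rule that)
qed

lemma finite_directions_dominate_norm:
  fixes V :: "'a::euclidean_space \<Rightarrow> 'a"
  assumes pos: "\<And>w. w \<noteq> 0 \<Longrightarrow> w \<bullet> V w > 0"
  obtains \<delta> W where "\<delta> > 0" "\<And>x. \<delta> * norm x \<le> (\<Sum>w\<in>W. max 0 (x \<bullet> V w))"
proof -
  obtain W where W: "finite W" "W \<subseteq> sphere 0 1" "W \<noteq> {}"
    and cover: "\<And>u. u \<in> sphere 0 1 \<Longrightarrow> \<exists>w\<in>W. (w \<bullet> V w) / 2 < u \<bullet> V w"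
    using finite_directions_cover_sphere[OF pos] by blast
  define \<delta> where "\<delta> = Min ((\<lambda>w. (w \<bullet> V w) / 2) ` W)"
  have "w \<noteq> 0" if "w \<in> W" for w
    using W(2) that by auto
  then have "\<delta> > 0"
    using W(1,3) pos by (auto simp: \<delta>_def)
  have \<delta>_le: "\<delta> \<le> (w \<bullet> V w) / 2" if "w \<in> W" for w
    unfolding \<delta>_def using W(1) that by (intro Min_le) auto
  have "\<delta> * norm x \<le> (\<Sum>w\<in>W. max 0 (x \<bullet> V w))" for x
  proof (cases "x = 0")
    case True
    then show ?thesis by (simp add: sum_nonneg)
  next
    case False
    define u where "u = x /\<^sub>R norm x"
    have "u \<in> sphere 0 1"
      using False by (simp add: u_def)
    with cover obtain w where w: "w \<in> W" "(w \<bullet> V w) / 2 < u \<bullet> V w" by blast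
    have "\<delta> * norm x \<le> (u \<bullet> V w) * norm x"
      using w \<delta>_le[OF w(1)] by (intro mult_right_mono) auto
    also have "\<dots> = x \<bullet> V w"
      using False by (simp add: u_def)
    also have "\<dots> \<le> (\<Sum>w\<in>W. max 0 (x \<bullet> V w))"
      using member_le_sum[OF w(1), of "\<lambda>w. max 0 (x \<bullet> V w)"] W(1) by simp
    finally show ?thesis .
  qed
  with \<open>\<delta> > 0\<close> show thesis
    by (rule that)
qed

lemma integral_norm_le_sum_positive_parts:
  fixes M :: "'a::euclidean_space measure"
  assumes "integrable M (\<lambda>x. x)" and dominate: "\<And>x. \<delta> * norm x \<le> (\<Sum>w\<in>W. max 0 (x \<bullet> V w))"
  shows "\<delta> * (\<integral>x. norm x \<partial>M) \<le> (\<Sum>w\<in>W. \<integral>x. max 0 (x \<bullet> V w) \<partial>M)"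
proof -
  have int_pos: "integrable M (\<lambda>x. max 0 (x \<bullet> V w))" for w
    using assms(1) by simp
  have "\<delta> * (\<integral>x. norm x \<partial>M) = (\<integral>x. \<delta> * norm x \<partial>M)"
    by simp
  also have "\<dots> \<le> (\<integral>x. (\<Sum>w\<in>W. max 0 (x \<bullet> V w)) \<partial>M)"
    using assms(1) int_pos dominate by (intro integral_mono) auto
  also have "\<dots> = (\<Sum>w\<in>W. \<integral>x. max 0 (x \<bullet> V w) \<partial>M)"
    using int_pos by (rule Bochner_Integration.integral_sum)
  finally show ?thesis .
qed

lemma density_pair_measure_in_couplings:
  fixes \<rho> \<mu> :: "'a::euclidean_space measure" and f :: "'a \<times> 'a \<Rightarrow> ennreal"
  assumes \<rho>: "prob_space \<rho>" "sets \<rho> = sets borel" and \<mu>: "prob_space \<mu>" "sets \<mu> = sets borel"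
    and f: "f \<in> borel_measurable (borel \<Otimes>\<^sub>M borel)"
    and marginal1: "\<And>x. (\<integral>\<^sup>+y. f (x, y) \<partial>\<mu>) = 1"
    and marginal2: "\<And>y. (\<integral>\<^sup>+x. f (x, y) \<partial>\<rho>) = 1"
  shows "density (\<rho> \<Otimes>\<^sub>M \<mu>) f \<in> couplings \<rho> \<mu>"
proof -
  interpret pair_prob_space \<rho> \<mu>
    using \<rho>(1) \<mu>(1) by (simp add: pair_prob_space_def pair_sigma_finite_def prob_space_imp_sigma_finite)
  define \<pi> where "\<pi> = density (\<rho> \<Otimes>\<^sub>M \<mu>) f"
  have sets_prod: "sets (\<rho> \<Otimes>\<^sub>M \<mu>) = sets (borel \<Otimes>\<^sub>M borel)"
    by (rule sets_pair_measure_cong[OF \<rho>(2) \<mu>(2)])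
  have [measurable]: "f \<in> borel_measurable (\<rho> \<Otimes>\<^sub>M \<mu>)"
    using f by (simp add: measurable_cong_sets[OF sets_prod refl])
  have "emeasure \<pi> (space \<pi>) = (\<integral>\<^sup>+z. f z * indicator (space (\<rho> \<Otimes>\<^sub>M \<mu>)) z \<partial>(\<rho> \<Otimes>\<^sub>M \<mu>))"
    by (simp add: \<pi>_def emeasure_density)
  also have "\<dots> = (\<integral>\<^sup>+z. f z \<partial>(\<rho> \<Otimes>\<^sub>M \<mu>))"
    by (rule nn_integral_cong) simp
  also have "\<dots> = (\<integral>\<^sup>+x. \<integral>\<^sup>+y. f (x, y) \<partial>\<mu> \<partial>\<rho>)"
    by (rule M2.nn_integral_fst[symmetric]) simp
  also have "\<dots> = 1"
    by (simp add: marginal1 M1.emeasure_space_1)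
  finally interpret \<pi>: prob_space \<pi>
    by (rule prob_spaceI)
  have "distributed \<pi> (\<rho> \<Otimes>\<^sub>M \<mu>) (\<lambda>z. (fst z, snd z)) f"
    by (simp add: distributed_def \<pi>_def distr_id2)
  from \<pi>.distr_marginal1[OF M1.sigma_finite_measure_axioms M2.sigma_finite_measure_axioms this]
    \<pi>.distr_marginal2[OF M1.sigma_finite_measure_axioms M2.sigma_finite_measure_axioms this]
  have "distr \<pi> \<rho> fst = \<rho>" "distr \<pi> \<mu> snd = \<mu>"
    by (simp_all add: distributed_def marginal1 marginal2 density_1)
  moreover have "distr \<pi> borel fst = distr \<pi> \<rho> fst" "distr \<pi> borel snd = distr \<pi> \<mu> snd"
    using \<rho>(2) \<mu>(2) by (auto intro: distr_cong)
  ultimately show ?thesis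
    using \<pi>.prob_space_axioms sets_prod by (simp add: couplings_def \<pi>_def)
qed

lemma corr_integral_eq_integral:
  fixes \<pi> :: "('a::euclidean_space \<times> 'a) measure"
  assumes "integrable \<pi> (\<lambda>z. fst z \<bullet> snd z)"
  shows "corr_pos \<pi> < \<infinity>" "corr_neg \<pi> < \<infinity>"
    and "corr_integral \<pi> = ereal (\<integral>z. fst z \<bullet> snd z \<partial>\<pi>)"
proof -
  have pos: "corr_pos \<pi> = (\<integral>\<^sup>+z. ennreal (fst z \<bullet> snd z) \<partial>\<pi>)"
    unfolding corr_pos_def by (simp add: ennreal_max_0)
  have neg: "corr_neg \<pi> = (\<integral>\<^sup>+z. ennreal (- (fst z \<bullet> snd z)) \<partial>\<pi>)"
    unfolding corr_neg_def by (simp add: ennreal_max_0)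
  have bound: "(\<integral>\<^sup>+z. ennreal (norm (fst z \<bullet> snd z)) \<partial>\<pi>) < \<infinity>"
    using assms by (simp add: integrable_iff_bounded)
  have "corr_pos \<pi> \<le> (\<integral>\<^sup>+z. ennreal (norm (fst z \<bullet> snd z)) \<partial>\<pi>)"
       "corr_neg \<pi> \<le> (\<integral>\<^sup>+z. ennreal (norm (fst z \<bullet> snd z)) \<partial>\<pi>)"
    unfolding pos neg by (auto intro!: nn_integral_mono ennreal_leI)
  with bound show fin: "corr_pos \<pi> < \<infinity>" "corr_neg \<pi> < \<infinity>"
    by (auto dest: le_less_trans)
  have "enn2ereal r = ereal (enn2real r)" if "r < \<infinity>" for r :: ennreal
    using that by (metis enn2ereal_ennreal enn2real_nonneg ennreal_enn2real infinity_ennreal_def)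
  with fin have "corr_integral \<pi> = ereal (enn2real (corr_pos \<pi>) - enn2real (corr_neg \<pi>))"
    by (simp add: corr_integral_def)
  also have "\<dots> = ereal (\<integral>z. fst z \<bullet> snd z \<partial>\<pi>)"
    using real_lebesgue_integral_def[OF assms] pos neg by simp
  finally show "corr_integral \<pi> = ereal (\<integral>z. fst z \<bullet> snd z \<partial>\<pi>)" .
qed

lemma max_corr_ge_integral:
  assumes "\<pi> \<in> couplings \<rho> \<mu>" and "integrable \<pi> (\<lambda>z. fst z \<bullet> snd z)"
  shows "ereal (\<integral>z. fst z \<bullet> snd z \<partial>\<pi>) \<le> max_corr \<rho> \<mu>"
  unfolding max_corr_def using assms corr_integral_eq_integral[OF assms(2)]
  by (force intro: SUP_upper2)

lemma integrable_bounded_mult_inner: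
  fixes \<rho> \<mu> :: "'a::euclidean_space measure" and f :: "'a \<times> 'a \<Rightarrow> real"
  assumes \<rho>: "prob_fm \<rho>" and \<mu>: "prob_fm \<mu>"
    and f[measurable]: "f \<in> borel_measurable (borel \<Otimes>\<^sub>M borel)" and f_bound: "\<And>z. \<bar>f z\<bar> \<le> B"
  shows "integrable (\<rho> \<Otimes>\<^sub>M \<mu>) (\<lambda>z. f z * (fst z \<bullet> snd z))"
proof -
  interpret pair_prob_space \<rho> \<mu>
    using prob_fmD(1)[OF \<rho>] prob_fmD(1)[OF \<mu>] by (simp add: pair_prob_space_def pair_sigma_finite_def prob_space_imp_sigma_finite)
  have borel_prod: "borel_measurable (\<rho> \<Otimes>\<^sub>M \<mu>) = borel_measurable (borel \<Otimes>\<^sub>M borel)"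
    by (rule measurable_cong_sets[OF sets_pair_measure_cong[OF prob_fmD(2)[OF \<rho>] prob_fmD(2)[OF \<mu>]] refl])
  have "integrable (\<rho> \<Otimes>\<^sub>M \<mu>) (\<lambda>z. norm (fst z) * norm (snd z))"
    using prob_fmD(4)[OF \<rho>] prob_fmD(4)[OF \<mu>]
    by (intro Fubini_integrable) (auto simp: borel_prod)
  then show ?thesis
  proof (rule Bochner_Integration.integrable_bound[OF integrable_mult_right[where c=B]])
    show "(\<lambda>z. f z * (fst z \<bullet> snd z)) \<in> borel_measurable (\<rho> \<Otimes>\<^sub>M \<mu>)"
      by (simp add: borel_prod)
    have "\<bar>f z\<bar> * \<bar>fst z \<bullet> snd z\<bar> \<le> B * (norm (fst z) * norm (snd z))" for z
      using f_bound[of z] by (intro mult_mono Cauchy_Schwarz_ineq2) auto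
    moreover have "0 \<le> B"
      using f_bound order_trans abs_ge_zero by blast
    ultimately show "AE z in \<rho> \<Otimes>\<^sub>M \<mu>. norm (f z * (fst z \<bullet> snd z)) \<le> norm (B * (norm (fst z) * norm (snd z)))"
      by (intro AE_I2) (simp add: abs_mult)
  qed
qed

lemma max_corr_ge_bounded_density:
  fixes \<rho> \<mu> :: "'a::euclidean_space measure" and f :: "'a \<times> 'a \<Rightarrow> real"
  assumes \<rho>: "prob_fm \<rho>" and \<mu>: "prob_fm \<mu>"
    and f[measurable]: "f \<in> borel_measurable (borel \<Otimes>\<^sub>M borel)"
    and f_nonneg: "\<And>z. 0 \<le> f z" and f_le: "\<And>z. f z \<le> B"
    and marginal1: "\<And>x. (\<integral>y. f (x, y) \<partial>\<mu>) = 1"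
    and marginal2: "\<And>y. (\<integral>x. f (x, y) \<partial>\<rho>) = 1"
  shows "ereal (\<integral>x. \<integral>y. f (x, y) * (x \<bullet> y) \<partial>\<mu> \<partial>\<rho>) \<le> max_corr \<rho> \<mu>"
proof -
  interpret \<rho>: prob_space \<rho> using prob_fmD(1)[OF \<rho>] .
  interpret \<mu>: prob_space \<mu> using prob_fmD(1)[OF \<mu>] .
  interpret pair_prob_space \<rho> \<mu> ..
  have "(\<integral>\<^sup>+y. ennreal (f (x, y)) \<partial>\<mu>) = 1" for x
  proof -
    have "integrable \<mu> (\<lambda>y. f (x, y))"
      using f_nonneg f_le by (intro \<mu>.integrable_const_bound[where B=B]) (auto simp: prob_fmD(3)[OF \<mu>])
    then show ?thesis
      using f_nonneg marginal1 by (simp add: nn_integral_eq_integral)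
  qed
  moreover have "(\<integral>\<^sup>+x. ennreal (f (x, y)) \<partial>\<rho>) = 1" for y
  proof -
    have "integrable \<rho> (\<lambda>x. f (x, y))"
      using f_nonneg f_le by (intro \<rho>.integrable_const_bound[where B=B]) (auto simp: prob_fmD(3)[OF \<rho>])
    then show ?thesis
      using f_nonneg marginal2 by (simp add: nn_integral_eq_integral)
  qed
  ultimately have coupling: "density (\<rho> \<Otimes>\<^sub>M \<mu>) f \<in> couplings \<rho> \<mu>"
    using prob_fmD(1,2)[OF \<rho>] prob_fmD(1,2)[OF \<mu>]
    by (intro density_pair_measure_in_couplings) auto
  have borel_prod: "borel_measurable (\<rho> \<Otimes>\<^sub>M \<mu>) = borel_measurable (borel \<Otimes>\<^sub>M borel)"
    by (rule measurable_cong_sets[OF sets_pair_measure_cong[OF prob_fmD(2)[OF \<rho>] prob_fmD(2)[OF \<mu>]] refl])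
  have int_fh: "integrable (\<rho> \<Otimes>\<^sub>M \<mu>) (\<lambda>z. f z * (fst z \<bullet> snd z))"
    using f_nonneg f_le by (intro integrable_bounded_mult_inner[OF \<rho> \<mu> f, of B]) (simp add: abs_le_iff)
  have h: "(\<lambda>z. fst z \<bullet> snd z) \<in> borel_measurable (\<rho> \<Otimes>\<^sub>M \<mu>)" and fP: "f \<in> borel_measurable (\<rho> \<Otimes>\<^sub>M \<mu>)"
    by (simp_all add: borel_prod)
  have "ereal (\<integral>z. fst z \<bullet> snd z \<partial>density (\<rho> \<Otimes>\<^sub>M \<mu>) f) \<le> max_corr \<rho> \<mu>"
    using coupling integrable_density[OF h fP AE_I2[OF f_nonneg]] int_fh
    by (intro max_corr_ge_integral) simp_all
  moreover have "(\<integral>z. fst z \<bullet> snd z \<partial>density (\<rho> \<Otimes>\<^sub>M \<mu>) f) = (\<integral>x. \<integral>y. f (x, y) * (x \<bullet> y) \<partial>\<mu> \<partial>\<rho>)"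
    using integral_density[OF h fP AE_I2[OF f_nonneg]] integral_fst'[OF int_fh] by simp
  ultimately show ?thesis
    by simp
qed

lemma integral_perturbed_product_correlation:
  fixes \<rho> \<mu> :: "'a::euclidean_space measure" and a G :: "'i \<Rightarrow> 'a \<Rightarrow> real"
  assumes \<rho>: "prob_fm \<rho>" and \<mu>: "prob_fm \<mu>"
    and a[measurable]: "\<And>w. a w \<in> borel_measurable borel"
    and G[measurable]: "\<And>w. G w \<in> borel_measurable borel"
    and a_bound: "\<And>w x. \<bar>a w x\<bar> \<le> A" and G_bound: "\<And>w y. \<bar>G w y\<bar> \<le> B"
  shows "(\<integral>x. \<integral>y. (1 + (\<Sum>w\<in>W. a w x * G w y)) * (x \<bullet> y) \<partial>\<mu> \<partial>\<rho>)
       = (\<integral>x. x \<partial>\<rho>) \<bullet> (\<integral>y. y \<partial>\<mu>) + (\<Sum>w\<in>W. \<integral>x. a w x * (x \<bullet> (\<integral>y. G w y *\<^sub>R y \<partial>\<mu>)) \<partial>\<rho>)"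
proof -
  define m where "m = (\<integral>y. y \<partial>\<mu>)"
  define V where "V w = (\<integral>y. G w y *\<^sub>R y \<partial>\<mu>)" for w
  have int_Gy: "integrable \<mu> (\<lambda>y. G w y *\<^sub>R y)" for w
    using prob_fmD(3,5)[OF \<mu>] G_bound by (intro integrable_bounded_scaleR) auto
  have int_ax: "integrable \<rho> (\<lambda>x. a w x * (x \<bullet> v))" for w v
    using integrable_bounded_scaleR[of \<rho> "\<lambda>x. x \<bullet> v" "a w" A] prob_fmD(3,5)[OF \<rho>] a_bound by simp
  have "(\<integral>y. (1 + (\<Sum>w\<in>W. a w x * G w y)) * (x \<bullet> y) \<partial>\<mu>) = x \<bullet> m + (\<Sum>w\<in>W. a w x * (x \<bullet> V w))" for x
  proof -
    have int_Gx: "integrable \<mu> (\<lambda>y. G w y * (x \<bullet> y))" for w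
      using integrable_inner_right[OF int_Gy, of x] by simp
    have G_inner: "(\<integral>y. G w y * (x \<bullet> y) \<partial>\<mu>) = x \<bullet> V w" for w
      using integral_inner_right[OF int_Gy, of x] by (simp add: V_def)
    have "(\<integral>y. (1 + (\<Sum>w\<in>W. a w x * G w y)) * (x \<bullet> y) \<partial>\<mu>)
        = (\<integral>y. x \<bullet> y + (\<Sum>w\<in>W. a w x * (G w y * (x \<bullet> y))) \<partial>\<mu>)"
      by (rule Bochner_Integration.integral_cong) (simp_all add: algebra_simps sum_distrib_left sum_distrib_right)
    also have "\<dots> = x \<bullet> m + (\<Sum>w\<in>W. a w x * (x \<bullet> V w))"
      using prob_fmD(5)[OF \<mu>] int_Gx by (simp add: m_def G_inner)
    finally show ?thesis .
  qed
  moreover have "(\<integral>x. x \<bullet> m + (\<Sum>w\<in>W. a w x * (x \<bullet> V w)) \<partial>\<rho>)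
      = (\<integral>x. x \<partial>\<rho>) \<bullet> m + (\<Sum>w\<in>W. \<integral>x. a w x * (x \<bullet> V w) \<partial>\<rho>)"
    using prob_fmD(5)[OF \<rho>] int_ax by simp
  ultimately show ?thesis
    by (simp add: m_def V_def)
qed

lemma max_corr_ge_tensor_perturbation:
  fixes \<rho> \<mu> :: "'a::euclidean_space measure" and W :: "'i set" and a G :: "'i \<Rightarrow> 'a \<Rightarrow> real"
  assumes \<rho>: "prob_fm \<rho>" and \<mu>: "prob_fm \<mu>"
    and a[measurable]: "\<And>w. a w \<in> borel_measurable borel"
    and G[measurable]: "\<And>w. G w \<in> borel_measurable borel"
    and a_bound: "\<And>w x. \<bar>a w x\<bar> \<le> A" and G_bound: "\<And>w y. \<bar>G w y\<bar> \<le> B"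
    and a_mean: "\<And>w. (\<integral>x. a w x \<partial>\<rho>) = 0" and G_mean: "\<And>w. (\<integral>y. G w y \<partial>\<mu>) = 0"
    and small: "\<And>x y. \<bar>\<Sum>w\<in>W. a w x * G w y\<bar> \<le> 1"
  shows "ereal ((\<integral>x. x \<partial>\<rho>) \<bullet> (\<integral>y. y \<partial>\<mu>)
           + (\<Sum>w\<in>W. \<integral>x. a w x * (x \<bullet> (\<integral>y. G w y *\<^sub>R y \<partial>\<mu>)) \<partial>\<rho>)) \<le> max_corr \<rho> \<mu>"
proof -
  interpret \<rho>: prob_space \<rho> using prob_fmD(1)[OF \<rho>] .
  interpret \<mu>: prob_space \<mu> using prob_fmD(1)[OF \<mu>] .
  have int_a: "integrable \<rho> (a w)" for w
    using a_bound by (intro \<rho>.integrable_const_bound[where B=A]) (auto simp: prob_fmD(3)[OF \<rho>])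
  have int_G: "integrable \<mu> (G w)" for w
    using G_bound by (intro \<mu>.integrable_const_bound[where B=B]) (auto simp: prob_fmD(3)[OF \<mu>])
  define f where "f z = 1 + (\<Sum>w\<in>W. a w (fst z) * G w (snd z))" for z
  have "ereal (\<integral>x. \<integral>y. f (x, y) * (x \<bullet> y) \<partial>\<mu> \<partial>\<rho>) \<le> max_corr \<rho> \<mu>"
  proof (rule max_corr_ge_bounded_density[OF \<rho> \<mu>])
    show "f \<in> borel_measurable (borel \<Otimes>\<^sub>M borel)"
      unfolding f_def by measurable
    show "0 \<le> f z" "f z \<le> 2" for z
      using small[of "fst z" "snd z"] by (auto simp: f_def abs_le_iff)
    show "(\<integral>y. f (x, y) \<partial>\<mu>) = 1" for x
      using int_G G_mean by (simp add: f_def \<mu>.prob_space)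
    show "(\<integral>x. f (x, y) \<partial>\<rho>) = 1" for y
      using int_a a_mean by (simp add: f_def \<rho>.prob_space)
  qed
  then show ?thesis
    using integral_perturbed_product_correlation[where a=a and G=G and W=W, OF \<rho> \<mu> a G a_bound G_bound]
    by (simp add: f_def)
qed

lemma integral_step_minus_const_mult_inner:
  fixes M :: "'a::euclidean_space measure"
  assumes "integrable M (\<lambda>x. x)" and "(\<integral>x. x \<partial>M) = 0"
  shows "(\<integral>x. ((if 0 < x \<bullet> v then 1 else 0) - c) * (x \<bullet> v) \<partial>M) = (\<integral>x. max 0 (x \<bullet> v) \<partial>M)"
proof -
  have "(\<integral>x. ((if 0 < x \<bullet> v then 1 else 0) - c) * (x \<bullet> v) \<partial>M) = (\<integral>x. max 0 (x \<bullet> v) - c * (x \<bullet> v) \<partial>M)"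
    by (rule Bochner_Integration.integral_cong) (auto simp: algebra_simps)
  also have "\<dots> = (\<integral>x. max 0 (x \<bullet> v) \<partial>M)"
    using assms by simp
  finally show ?thesis .
qed

lemma max_corr_ge_sum_positive_parts:
  fixes \<rho> \<mu> :: "'a::euclidean_space measure" and W :: "'i set" and G :: "'i \<Rightarrow> 'a \<Rightarrow> real"
  assumes \<rho>: "prob_fm \<rho>" "(\<integral>x. x \<partial>\<rho>) = 0" and \<mu>: "prob_fm \<mu>"
    and G[measurable]: "\<And>w. G w \<in> borel_measurable borel"
    and G_bound: "\<And>w y. \<bar>G w y\<bar> \<le> B" and G_mean: "\<And>w. (\<integral>y. G w y \<partial>\<mu>) = 0"
    and t: "0 \<le> t" "t * B * card W \<le> 1"
  shows "ereal (t * (\<Sum>w\<in>W. \<integral>x. max 0 (x \<bullet> (\<integral>y. G w y *\<^sub>R y \<partial>\<mu>)) \<partial>\<rho>)) \<le> max_corr \<rho> \<mu>"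
proof -
  interpret \<rho>: prob_space \<rho> using prob_fmD(1)[OF \<rho>(1)] .
  define V where "V w = (\<integral>y. G w y *\<^sub>R y \<partial>\<mu>)" for w
  define s where "s w x = (if 0 < x \<bullet> V w then 1 else 0 :: real)" for w x
  define p where "p w = (\<integral>x. s w x \<partial>\<rho>)" for w
  define a where "a w x = t * (s w x - p w)" for w x
  have [measurable]: "s w \<in> borel_measurable borel" for w
    unfolding s_def by measurable
  have int_s: "integrable \<rho> (s w)" for w
    by (intro \<rho>.integrable_const_bound[where B=1]) (auto simp: s_def prob_fmD(3)[OF \<rho>(1)])
  have p_nonneg: "0 \<le> p w" for w
    unfolding p_def by (rule Bochner_Integration.integral_nonneg) (simp add: s_def)
  have p_le_1: "p w \<le> 1" for w
    unfolding p_def by (rule \<rho>.integral_le_const[OF int_s]) (simp add: s_def)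
  have "\<bar>s w x - p w\<bar> \<le> 1" for w x
    using p_nonneg[of w] p_le_1[of w] by (simp add: s_def abs_le_iff)
  then have a_bound: "\<bar>a w x\<bar> \<le> t" for w x
    using t(1) by (simp add: a_def abs_mult mult_left_le)
  have "\<bar>\<Sum>w\<in>W. a w x * G w y\<bar> \<le> 1" for x y
  proof -
    have "\<bar>\<Sum>w\<in>W. a w x * G w y\<bar> \<le> (\<Sum>w\<in>W. t * B)"
      using a_bound G_bound t(1)
      by (intro order_trans[OF sum_abs] sum_mono) (auto simp: abs_mult intro: mult_mono)
    with t(2) show ?thesis
      by (simp add: mult.commute)
  qed
  moreover have "(\<integral>x. a w x \<partial>\<rho>) = 0" for w
    using int_s by (simp add: a_def p_def \<rho>.prob_space)
  ultimately have "ereal ((\<integral>x. x \<partial>\<rho>) \<bullet> (\<integral>y. y \<partial>\<mu>) + (\<Sum>w\<in>W. \<integral>x. a w x * (x \<bullet> V w) \<partial>\<rho>)) \<le> max_corr \<rho> \<mu>"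
    unfolding V_def using \<rho>(1) \<mu> G_bound G_mean a_bound
    by (intro max_corr_ge_tensor_perturbation) (auto simp: a_def)
  moreover have "(\<integral>x. a w x * (x \<bullet> V w) \<partial>\<rho>) = t * (\<integral>x. max 0 (x \<bullet> V w) \<partial>\<rho>)" for w
    using integral_step_minus_const_mult_inner[OF prob_fmD(5)[OF \<rho>(1)] \<rho>(2), of "V w" "p w"]
    by (simp add: a_def s_def mult.assoc)
  ultimately show ?thesis
    using \<rho>(2) by (simp add: V_def sum_distrib_left)
qed

definition centered_arctan :: "'a::euclidean_space measure \<Rightarrow> 'a \<Rightarrow> 'a \<Rightarrow> real" where
  "centered_arctan \<mu> w y = arctan (w \<bullet> y) - (\<integral>z. arctan (w \<bullet> z) \<partial>\<mu>)"

lemma centered_arctan_measurable[measurable]: "centered_arctan \<mu> w \<in> borel_measurable borel"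
  unfolding centered_arctan_def by measurable

lemma abs_arctan_le_pi_half: "\<bar>arctan x\<bar> \<le> pi / 2"
  using arctan_bounded[of x] by linarith

lemma integrable_arctan_inner:
  assumes "prob_space M" "sets M = sets borel"
  shows "integrable M (\<lambda>z. arctan (w \<bullet> z))"
proof (rule finite_measure.integrable_const_bound[where B="pi / 2"])
  show "finite_measure M"
    using assms(1) by (rule prob_space.finite_measure)
  show "AE z in M. norm (arctan (w \<bullet> z)) \<le> pi / 2"
    using abs_arctan_le_pi_half by simp
  show "(\<lambda>z. arctan (w \<bullet> z)) \<in> borel_measurable M"
    unfolding measurable_cong_sets[OF assms(2) refl]
    by (intro borel_measurable_continuous_onI continuous_intros)
qed

lemma abs_centered_arctan_le:
  assumes "prob_space M" "sets M = sets borel"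
  shows "\<bar>centered_arctan M w y\<bar> \<le> pi"
proof -
  interpret prob_space M by fact
  have "\<bar>\<integral>z. arctan (w \<bullet> z) \<partial>M\<bar> \<le> (\<integral>z. \<bar>arctan (w \<bullet> z)\<bar> \<partial>M)"
    using integral_norm_bound[of M "\<lambda>z. arctan (w \<bullet> z)"] by simp
  also have "\<dots> \<le> pi / 2"
    using integrable_arctan_inner[OF assms] abs_arctan_le_pi_half by (intro integral_le_const) auto
  finally show ?thesis
    using abs_arctan_le_pi_half[of "w \<bullet> y"] by (simp add: centered_arctan_def)
qed

lemma integral_centered_arctan:
  assumes "prob_space M" "sets M = sets borel"
  shows "(\<integral>y. centered_arctan M w y \<partial>M) = 0"
proof -
  interpret prob_space M by fact
  show ?thesis
    using integrable_arctan_inner[OF assms]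
    by (simp add: centered_arctan_def Bochner_Integration.integral_diff prob_space)
qed

lemma inner_centered_arctan_moment_pos:
  fixes \<mu> :: "'a::euclidean_space measure"
  assumes \<mu>: "prob_fm \<mu>" and nondegenerate: "\<not> (\<exists>H. affine_hyperplane H \<and> msupport \<mu> \<subseteq> H)"
    and "w \<noteq> 0"
  shows "w \<bullet> (\<integral>y. centered_arctan \<mu> w y *\<^sub>R y \<partial>\<mu>) > 0"
proof -
  interpret prob_space \<mu> using prob_fmD(1)[OF \<mu>] .
  have "\<not> (AE y in \<mu>. w \<bullet> y = expectation (\<lambda>y. w \<bullet> y))"
  proof
    assume "AE y in \<mu>. w \<bullet> y = expectation (\<lambda>y. w \<bullet> y)"
    then have "msupport \<mu> \<subseteq> {y. w \<bullet> y = expectation (\<lambda>y. w \<bullet> y)}"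
      using prob_fmD(2)[OF \<mu>] by (intro msupport_subset_closed) (auto simp: closed_hyperplane)
    with nondegenerate \<open>w \<noteq> 0\<close> show False
      unfolding affine_hyperplane_def by blast
  qed
  moreover have "strict_mono arctan"
    by (simp add: strict_mono_def arctan_less_iff)
  ultimately have "expectation (\<lambda>y. (arctan (w \<bullet> y) - expectation (\<lambda>y. arctan (w \<bullet> y))) * (w \<bullet> y)) > 0"
    using prob_fmD(5)[OF \<mu>] abs_arctan_le_pi_half
    by (intro covariance_strict_mono_pos[where B="pi / 2"]) auto
  then have "expectation (\<lambda>y. centered_arctan \<mu> w y * (w \<bullet> y)) > 0"
    by (simp add: centered_arctan_def)
  moreover have "integrable \<mu> (\<lambda>y. centered_arctan \<mu> w y *\<^sub>R y)"
    using prob_fmD(3,5)[OF \<mu>] abs_centered_arctan_le[OF prob_fmD(1,2)[OF \<mu>]]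
    by (intro integrable_bounded_scaleR) auto
  from integral_inner_right[OF this, of w]
  have "w \<bullet> (\<integral>y. centered_arctan \<mu> w y *\<^sub>R y \<partial>\<mu>) = expectation (\<lambda>y. centered_arctan \<mu> w y * (w \<bullet> y))"
    by simp
  ultimately show ?thesis
    by simp
qed

theorem proposition2p5:
  fixes \<mu> :: "'a::euclidean_space measure"
  assumes "prob_fm \<mu>"
    and "\<not> (\<exists>H. affine_hyperplane H \<and> msupport \<mu> \<subseteq> H)"
  shows "\<exists>c>0. \<forall>\<rho>::'a measure. prob_fm \<rho> \<and> (\<integral>x. x \<partial>\<rho>) = 0 \<longrightarrow>
           max_corr \<rho> \<mu> \<ge> ereal (c * (\<integral>x. norm x \<partial>\<rho>))"
proof -
  define V where "V w = (\<integral>y. centered_arctan \<mu> w y *\<^sub>R y \<partial>\<mu>)" for w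
  have "w \<bullet> V w > 0" if "w \<noteq> 0" for w
    using inner_centered_arctan_moment_pos[OF assms that] by (simp add: V_def)
  then obtain \<delta> W where "\<delta> > 0" and dominate: "\<And>x. \<delta> * norm x \<le> (\<Sum>w\<in>W. max 0 (x \<bullet> V w))"
    by (rule finite_directions_dominate_norm) auto
  define t where "t = 1 / (pi * (card W + 1))"
  have "0 < pi * (card W + 1)"
    by (simp add: add_pos_nonneg)
  then have t: "0 < t" "t * pi * card W \<le> 1"
    by (simp_all add: t_def field_simps)
  show ?thesis
  proof (intro exI[of _ "t * \<delta>"] conjI allI impI)
    show "0 < t * \<delta>"
      using t(1) \<open>\<delta> > 0\<close> by simp
    fix \<rho> :: "'a measure" assume \<rho>: "prob_fm \<rho> \<and> (\<integral>x. x \<partial>\<rho>) = 0"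
    have "ereal (t * \<delta> * (\<integral>x. norm x \<partial>\<rho>)) \<le> ereal (t * (\<Sum>w\<in>W. \<integral>x. max 0 (x \<bullet> V w) \<partial>\<rho>))"
      using integral_norm_le_sum_positive_parts[OF prob_fmD(5) dominate] \<rho> t(1)
      by (simp add: mult.assoc)
    also have "\<dots> \<le> max_corr \<rho> \<mu>"
      unfolding V_def using \<rho> assms(1) t abs_centered_arctan_le integral_centered_arctan
        prob_fmD(1,2)[OF assms(1)] by (intro max_corr_ge_sum_positive_parts) auto
    finally show "ereal (t * \<delta> * (\<integral>x. norm x \<partial>\<rho>)) \<le> max_corr \<rho> \<mu>" .
  qed
qed

end
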